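(* Let $G$ be a simple undirected connected graph on vertices $u_1,\dots,u_n$ with Laplacian $L$, let $u_a\neq u_b$ satisfy $N(u_a)\setminus\{u_b\}=N(u_b)\setminus\{u_a\}$, let $M=(\mathbf e_a-\mathbf e_b)(\mathbf e_a-\mathbf e_b)^T$, $\alpha\in\mathbb R$ and $L^\alpha=L+\alpha M$. Suppose $L$ is almost periodic at $u_p$ with respect to a sequence $(\tau_k)$ of nonzero reals. Then: (1) if $p\in\{a,b\}$ and $2\alpha\tau_k\in\pi(2\mathbb Z+1)$ for all $k$, then $L^\alpha$ exhibits pretty good state transfer between $u_a$ and $u_b$ with respect to $(\tau_k)$; (2) if $p\notin\{a,b\}$, then $L^\alpha$ is almost periodic at $u_p$ with respect to $(\tau_k)$.
   Context: $N(u)$ is the neighbourhood of $u$; $L=D-A$; $\mathbf e_j$ is the standard basis vector of $u_j$. For a real symmetric $H$, $U_H(t)=\exp(-itH)$. $H$ exhibits pretty good state transfer between distinct $u_p,u_q$ with respect to a real sequence $(\tau_k)$ if $\lim_{k\to\infty}U_H(\tau_k)\mathbf e_p=\gamma\mathbf e_q$ for some $\gamma\in\mathbb C$; $H$ is almost periodic at $u_p$ with respect to a sequence $(\tau_k)$ of nonzero reals if $\lim_{k\to\infty}U_H(\tau_k)\mathbf e_p=\gamma\mathbf e_p$ for some $\gamma\in\mathbb C$. *)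

theory Defs
  imports "HOL-Analysis.Analysis"
begin

definition simple_graph :: "('n \<Rightarrow> 'n \<Rightarrow> bool) \<Rightarrow> bool" where
  "simple_graph E \<longleftrightarrow> (\<forall>u v. E u v \<longleftrightarrow> E v u) \<and> (\<forall>u. \<not> E u u)"

definition connected_graph :: "('n \<Rightarrow> 'n \<Rightarrow> bool) \<Rightarrow> bool" where
  "connected_graph E \<longleftrightarrow> (\<forall>u v. E\<^sup>*\<^sup>* u v)"

definition nbhd :: "('n \<Rightarrow> 'n \<Rightarrow> bool) \<Rightarrow> 'n \<Rightarrow> 'n set" where
  "nbhd E u = {v. E u v}"

definition laplacian :: "('n::finite \<Rightarrow> 'n \<Rightarrow> bool) \<Rightarrow> complex^'n^'n" where
  "laplacian E = (\<chi> i j. (if i = j then of_nat (card (nbhd E i)) else 0)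
                         - (if E i j then 1 else 0))"

definition evec :: "'n::finite \<Rightarrow> complex^'n" where
  "evec j = (\<chi> i. if i = j then 1 else 0)"

definition Mab :: "'n::finite \<Rightarrow> 'n \<Rightarrow> complex^'n^'n" where
  "Mab a b = (\<chi> i j. (evec a - evec b) $ i * (evec a - evec b) $ j)"

primrec mpow :: "complex^'n^'n \<Rightarrow> nat \<Rightarrow> complex^'n^'n" where
  "mpow A 0 = mat 1"
| "mpow A (Suc k) = A ** mpow A k"

definition mexp :: "complex^'n^'n \<Rightarrow> complex^'n^'n" where
  "mexp A = (\<chi> i j. \<Sum>k. (mpow A k) $ i $ j / of_nat (fact k))"

definition cscale :: "complex \<Rightarrow> complex^'n^'n \<Rightarrow> complex^'n^'n" where
  "cscale c A = (\<chi> i j. c * A $ i $ j)"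

definition U :: "complex^'n^'n \<Rightarrow> real \<Rightarrow> complex^'n^'n" where
  "U H t = mexp (cscale (- (\<i> * of_real t)) H)"

definition pgst :: "complex^'n^'n \<Rightarrow> 'n::finite \<Rightarrow> 'n \<Rightarrow> (nat \<Rightarrow> real) \<Rightarrow> bool" where
  "pgst H p q \<tau> \<longleftrightarrow> p \<noteq> q \<and>
     (\<exists>\<gamma>::complex. (\<lambda>k. U H (\<tau> k) *v evec p) \<longlonglongrightarrow> \<gamma> *s evec q)"

definition almost_periodic :: "complex^'n^'n \<Rightarrow> 'n::finite \<Rightarrow> (nat \<Rightarrow> real) \<Rightarrow> bool" where
  "almost_periodic H p \<tau> \<longleftrightarrow> (\<forall>k. \<tau> k \<noteq> 0) \<and>
     (\<exists>\<gamma>::complex. (\<lambda>k. U H (\<tau> k) *v evec p) \<longlonglongrightarrow> \<gamma> *s evec p)"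

end

theory Submission
  imports Defs
begin

text \<open>The vector \<open>v = e\<^sub>a - e\<^sub>b\<close> is an eigenvector of \<open>L\<close> (twin vertices have equal
  degree and equal neighbours) and of \<open>M\<close> (eigenvalue 2), while the complement
  \<open>W = {w. w\<^sub>a = w\<^sub>b}\<close> is \<open>L\<close>-invariant and killed by \<open>M\<close>. Hence \<open>U\<^bsub>L\<^sup>\<alpha>\<^esub>(t)\<close> agrees with
  \<open>U\<^bsub>L\<^esub>(t)\<close> on \<open>W\<close> and differs on \<open>v\<close> only by the phase \<open>exp(-2i\<alpha>t)\<close>. A vertex
  \<open>p \<notin> {a, b}\<close> has \<open>e\<^sub>p \<in> W\<close>, which gives (2). If the phase is \<open>-1\<close>, writing
  \<open>e\<^sub>a, e\<^sub>b = (e\<^sub>a + e\<^sub>b)/2 \<plusminus> v/2\<close> gives \<open>U\<^bsub>L\<^sup>\<alpha>\<^esub>(t) e\<^sub>a = U\<^bsub>L\<^esub>(t) e\<^sub>b\<close>, and \<open>U\<^bsub>L\<^esub>(t) e\<^sub>b\<close> is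
  \<open>U\<^bsub>L\<^esub>(t) e\<^sub>a\<close> with coordinates \<open>a\<close>, \<open>b\<close> interchanged, so it tends to \<open>\<gamma> e\<^sub>b\<close>; this gives (1).\<close>

lemma norm_mpow_entry_le:
  fixes A :: "complex^'n::finite^'n"
  shows "norm (mpow A k $ i $ j) \<le> (\<Sum>i\<in>UNIV. \<Sum>j\<in>UNIV. norm (A $ i $ j)) ^ k"
proof (induction k arbitrary: i j)
  case 0
  then show ?case by (simp add: mat_def)
next
  case (Suc k)
  define S where "S = (\<Sum>i\<in>UNIV. \<Sum>j\<in>UNIV. norm (A $ i $ j))"
  have "norm (mpow A (Suc k) $ i $ j) = norm (\<Sum>m\<in>UNIV. A $ i $ m * mpow A k $ m $ j)"
    by (simp add: matrix_matrix_mult_def)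
  also have "\<dots> \<le> (\<Sum>m\<in>UNIV. norm (A $ i $ m) * S ^ k)"
    by (rule order_trans[OF norm_sum sum_mono])
      (simp add: norm_mult mult_left_mono Suc[unfolded S_def[symmetric]])
  also have "\<dots> = (\<Sum>m\<in>UNIV. norm (A $ i $ m)) * S ^ k"
    by (simp add: sum_distrib_right)
  also have "\<dots> \<le> S * S ^ k"
  proof (rule mult_right_mono)
    show "(\<Sum>m\<in>UNIV. norm (A $ i $ m)) \<le> S"
      unfolding S_def
      by (rule member_le_sum[where f = "\<lambda>i. \<Sum>j\<in>UNIV. norm (A $ i $ j)"]) (auto intro: sum_nonneg)
  qed (simp add: S_def sum_nonneg)
  finally show ?case by (simp add: S_def)
qed

lemma summable_mexp_entry:
  fixes A :: "complex^'n::finite^'n"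
  shows "summable (\<lambda>k. mpow A k $ i $ j / of_nat (fact k))"
proof (rule summable_comparison_test)
  define S where "S = (\<Sum>i\<in>UNIV. \<Sum>j\<in>UNIV. norm (A $ i $ j))"
  show "\<exists>N. \<forall>k\<ge>N. norm (mpow A k $ i $ j / of_nat (fact k)) \<le> inverse (fact k) * S ^ k"
    using norm_mpow_entry_le[of A] by (auto simp: S_def norm_divide divide_simps)
  show "summable (\<lambda>k. inverse (fact k) * S ^ k)"
    by (rule summable_exp)
qed

lemma mexp_mulvec_nth:
  fixes A :: "complex^'n::finite^'n"
  shows "(mexp A *v w) $ i = (\<Sum>k. (mpow A k *v w) $ i / of_nat (fact k))"
proof -
  have "(mexp A *v w) $ i = (\<Sum>j\<in>UNIV. (\<Sum>k. mpow A k $ i $ j / of_nat (fact k)) * w $ j)"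
    by (simp add: mexp_def matrix_vector_mult_def)
  also have "\<dots> = (\<Sum>j\<in>UNIV. \<Sum>k. mpow A k $ i $ j / of_nat (fact k) * w $ j)"
    by (simp only: suminf_mult2[OF summable_mexp_entry])
  also have "\<dots> = (\<Sum>k. \<Sum>j\<in>UNIV. mpow A k $ i $ j / of_nat (fact k) * w $ j)"
    by (rule suminf_sum[symmetric]) (intro summable_mult2 summable_mexp_entry)
  also have "\<dots> = (\<Sum>k. (mpow A k *v w) $ i / of_nat (fact k))"
    by (simp add: matrix_vector_mult_def sum_divide_distrib)
  finally show ?thesis .
qed

lemma mpow_mulvec_eigenvector:
  fixes A :: "complex^'n::finite^'n"
  assumes "A *v v = \<mu> *s v"
  shows "mpow A k *v v = \<mu> ^ k *s v"
proof (induction k)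
  case 0
  then show ?case by simp
next
  case (Suc k)
  have "mpow A (Suc k) *v v = A *v (mpow A k *v v)"
    by (simp add: matrix_vector_mul_assoc)
  also have "\<dots> = \<mu> ^ Suc k *s v"
    using Suc by (simp add: vector_scalar_commute assms)
  finally show ?case .
qed

lemma mexp_mulvec_eigenvector:
  fixes A :: "complex^'n::finite^'n"
  assumes "A *v v = \<mu> *s v"
  shows "mexp A *v v = exp \<mu> *s v"
proof -
  have "(\<lambda>k. \<mu> ^ k / of_nat (fact k) * v $ i) sums (exp \<mu> * v $ i)" for i
  proof -
    have "(\<lambda>k. \<mu> ^ k /\<^sub>R fact k * v $ i) sums (exp \<mu> * v $ i)"
      by (rule sums_mult2[OF exp_converges])
    then show ?thesis
      by (simp add: scaleR_conv_of_real divide_inverse mult_ac)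
  qed
  then show ?thesis
    by (simp add: vec_eq_iff mexp_mulvec_nth mpow_mulvec_eigenvector[OF assms] sums_unique[symmetric])
qed

lemma mpow_mulvec_agree_on_balanced:
  fixes A B :: "complex^'n::finite^'n"
  assumes preserves: "\<And>u. u $ a = u $ b \<Longrightarrow> (A *v u) $ a = (A *v u) $ b"
    and agree: "\<And>u. u $ a = u $ b \<Longrightarrow> A *v u = B *v u"
    and "w $ a = w $ b"
  shows "mpow A k *v w = mpow B k *v w \<and> (mpow A k *v w) $ a = (mpow A k *v w) $ b"
proof (induction k)
  case 0
  then show ?case using assms(3) by simp
next
  case (Suc k)
  have "mpow X (Suc k) *v w = X *v (mpow X k *v w)" for X :: "complex^'n^'n"
    by (simp add: matrix_vector_mul_assoc)
  then show ?case
    using Suc preserves agree by metis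
qed

text \<open>The set \<open>{u. u\<^sub>a = u\<^sub>b}\<close> passes from the powers to the exponential because its
  defining condition is coordinatewise.\<close>

lemma mexp_mulvec_agree_on_balanced:
  fixes A B :: "complex^'n::finite^'n"
  assumes "\<And>u. u $ a = u $ b \<Longrightarrow> (A *v u) $ a = (A *v u) $ b"
    and "\<And>u. u $ a = u $ b \<Longrightarrow> A *v u = B *v u"
    and "w $ a = w $ b"
  shows "mexp A *v w = mexp B *v w" and "(mexp A *v w) $ a = (mexp A *v w) $ b"
proof -
  have "mpow A k *v w = mpow B k *v w" and "(mpow A k *v w) $ a = (mpow A k *v w) $ b" for k
    using mpow_mulvec_agree_on_balanced[OF assms] by blast+
  then show "mexp A *v w = mexp B *v w" and "(mexp A *v w) $ a = (mexp A *v w) $ b"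
    unfolding vec_eq_iff mexp_mulvec_nth by simp_all
qed

lemma cscale_mulvec: "cscale c A *v w = c *s (A *v (w::complex^'n::finite))"
  by (simp add: vec_eq_iff cscale_def matrix_vector_mult_def sum_distrib_left mult.assoc)

lemma sum_evec_mult: "(\<Sum>j\<in>UNIV. evec a $ j * w $ j) = (w::complex^'n::finite) $ a"
proof -
  have "(\<Sum>j\<in>UNIV. evec a $ j * w $ j) = (\<Sum>j\<in>UNIV. if j = a then w $ j else 0)"
    by (rule sum.cong) (auto simp: evec_def)
  then show ?thesis by simp
qed

lemma sum_mult_evec: "(\<Sum>j\<in>UNIV. f j * evec a $ j) = f (a::'n::finite)"
proof -
  have "(\<Sum>j\<in>UNIV. f j * evec a $ j) = (\<Sum>j\<in>UNIV. if j = a then f j else 0)"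
    by (rule sum.cong) (auto simp: evec_def)
  then show ?thesis by simp
qed

lemma Mab_mulvec_nth:
  "(Mab a b *v w) $ i = (evec a - evec b) $ i * ((w::complex^'n::finite) $ a - w $ b)"
proof -
  let ?v = "evec a - evec b"
  have "(Mab a b *v w) $ i = ?v $ i * (\<Sum>j\<in>UNIV. ?v $ j * w $ j)"
    by (simp add: Mab_def matrix_vector_mult_def sum_distrib_left mult.assoc)
  then show ?thesis
    by (simp add: left_diff_distrib sum_subtractf sum_evec_mult)
qed

lemma Mab_commute: "Mab a b = Mab b a"
  by (simp add: Mab_def vec_eq_iff algebra_simps)

lemma exp_odd_multiple_of_pi:
  assumes "2 * \<alpha> * t = pi * (2 * of_int m + 1)"
  shows "exp (- (\<i> * of_real t) * (2 * of_real \<alpha>)) = -1"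
proof -
  have "- (\<i> * of_real t) * (2 * of_real \<alpha>) = complex_of_real (- (pi * real_of_int (2 * m + 1))) * \<i>"
    using arg_cong[OF assms, of complex_of_real] by (simp add: algebra_simps)
  then show ?thesis
    using cos_npi_int[of "2 * m + 1"] sin_npi_int[of "2 * m + 1"]
    by (simp add: exp_eq_polar complex_eq_iff)
qed

lemma tendsto_exchange_coords:
  fixes x :: "nat \<Rightarrow> complex^'n::finite"
  assumes "x \<longlonglongrightarrow> \<gamma> *s evec a" and "a \<noteq> b"
  shows "(\<lambda>k. x k - (x k $ a - x k $ b) *s (evec a - evec b)) \<longlonglongrightarrow> \<gamma> *s evec b"
proof (rule vec_tendstoI)
  fix i
  have "(\<lambda>k. x k $ i - (x k $ a - x k $ b) * (evec a - evec b) $ i) \<longlonglongrightarrow>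
      (\<gamma> *s evec a) $ i - ((\<gamma> *s evec a) $ a - (\<gamma> *s evec a) $ b) * (evec a - evec b) $ i"
    by (intro tendsto_intros tendsto_vec_nth[OF assms(1)])
  then show "(\<lambda>k. (x k - (x k $ a - x k $ b) *s (evec a - evec b)) $ i) \<longlonglongrightarrow> (\<gamma> *s evec b) $ i"
    using assms(2) by (cases "i = a"; cases "i = b") (simp_all add: evec_def)
qed

definition twin_eigenvalue :: "('n \<Rightarrow> 'n \<Rightarrow> bool) \<Rightarrow> 'n \<Rightarrow> 'n \<Rightarrow> complex" where
  "twin_eigenvalue E a b = of_nat (card (nbhd E a)) + (if E a b then 1 else 0)"

lemma laplacian_symmetric: "simple_graph E \<Longrightarrow> laplacian E $ i $ j = laplacian E $ j $ i"
  by (auto simp: laplacian_def simple_graph_def)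

context
  fixes E :: "'n::finite \<Rightarrow> 'n \<Rightarrow> bool" and a b :: 'n
  assumes simple: "simple_graph E" and distinct: "a \<noteq> b"
    and twins: "nbhd E a - {b} = nbhd E b - {a}"
begin

lemma card_nbhd_twins: "card (nbhd E a) = card (nbhd E b)"
proof -
  have remove: "card (nbhd E u) = card (nbhd E u - {v}) + (if E u v then 1 else 0)" for u v
  proof (cases "E u v")
    case True
    then show ?thesis
      using card.remove[of "nbhd E u" v] by (simp add: nbhd_def)
  next
    case False
    then have "nbhd E u - {v} = nbhd E u"
      by (auto simp: nbhd_def)
    then show ?thesis
      using False by simp
  qed
  have "E a b \<longleftrightarrow> E b a"
    using simple unfolding simple_graph_def by blast
  then have "card (nbhd E a) = card (nbhd E b - {a}) + (if E b a then 1 else 0)"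
    using remove[of a b] twins by simp
  also have "\<dots> = card (nbhd E b)"
    using remove[of b a] by simp
  finally show ?thesis .
qed

lemma laplacian_mulvec_twin_vector:
  "laplacian E *v (evec a - evec b) = twin_eigenvalue E a b *s (evec a - evec b)"
proof -
  have sym: "E u v \<longleftrightarrow> E v u" and irrefl: "\<not> E u u" for u v
    using simple by (auto simp: simple_graph_def)
  have common: "E i a \<longleftrightarrow> E i b" if "i \<noteq> a" "i \<noteq> b" for i
  proof -
    have "i \<in> nbhd E a - {b} \<longleftrightarrow> i \<in> nbhd E b - {a}"
      using twins by simp
    then show ?thesis
      using that sym by (auto simp: nbhd_def)
  qed
  have "(laplacian E *v (evec a - evec b)) $ i = laplacian E $ i $ a - laplacian E $ i $ b" for i
    by (simp add: matrix_vector_mult_def right_diff_distrib sum_subtractf sum_mult_evec)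
  then show ?thesis
    using distinct common card_nbhd_twins sym irrefl
    by (auto simp: vec_eq_iff laplacian_def twin_eigenvalue_def evec_def)
qed

text \<open>By symmetry of \<open>L\<close>, \<open>(L w)\<^sub>a - (L w)\<^sub>b = (L v)\<^sup>T w = \<lambda> (w\<^sub>a - w\<^sub>b)\<close>.\<close>

lemma laplacian_mulvec_balanced:
  assumes "w $ a = w $ b"
  shows "(laplacian E *v w) $ a = (laplacian E *v w) $ b"
proof -
  let ?L = "laplacian E" and ?v = "evec a - evec b"
  have "(?L *v w) $ a - (?L *v w) $ b = (\<Sum>j\<in>UNIV. (?L *v ?v) $ j * w $ j)"
    by (simp add: matrix_vector_mult_def right_diff_distrib left_diff_distrib sum_subtractf
        sum_mult_evec laplacian_symmetric[OF simple])
  also have "\<dots> = twin_eigenvalue E a b * (\<Sum>j\<in>UNIV. ?v $ j * w $ j)"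
    unfolding laplacian_mulvec_twin_vector by (simp add: sum_distrib_left algebra_simps)
  also have "\<dots> = 0"
    by (simp add: left_diff_distrib sum_subtractf sum_evec_mult assms)
  finally show ?thesis by simp
qed

lemma U_laplacian_twin_vector:
  "U (laplacian E) t *v (evec a - evec b)
     = exp (- (\<i> * of_real t) * twin_eigenvalue E a b) *s (evec a - evec b)"
  unfolding U_def
  by (rule mexp_mulvec_eigenvector)
    (simp only: cscale_mulvec laplacian_mulvec_twin_vector vector_smult_assoc)

context
  fixes \<alpha> :: real
begin

abbreviation perturbed_laplacian :: "complex^'n^'n" where
  "perturbed_laplacian \<equiv> laplacian E + cscale (of_real \<alpha>) (Mab a b)"

lemma U_mulvec_balanced:
  assumes "w $ a = w $ b"
  shows "U perturbed_laplacian t *v w = U (laplacian E) t *v w"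
    and "(U (laplacian E) t *v w) $ a = (U (laplacian E) t *v w) $ b"
proof -
  let ?c = "- (\<i> * of_real t)"
  have "(cscale ?c (laplacian E) *v u) $ a = (cscale ?c (laplacian E) *v u) $ b"
    and "cscale ?c (laplacian E) *v u = cscale ?c perturbed_laplacian *v u" if "u $ a = u $ b" for u
    using laplacian_mulvec_balanced[OF that] that
    by (simp_all add: cscale_mulvec matrix_vector_mult_add_rdistrib vec_eq_iff Mab_mulvec_nth)
  from mexp_mulvec_agree_on_balanced[OF this assms] show
    "U perturbed_laplacian t *v w = U (laplacian E) t *v w"
    "(U (laplacian E) t *v w) $ a = (U (laplacian E) t *v w) $ b"
    unfolding U_def by simp_all
qed

lemma perturbed_laplacian_mulvec_twin_vector:
  "perturbed_laplacian *v (evec a - evec b) = (twin_eigenvalue E a b + 2 * of_real \<alpha>) *s (evec a - evec b)"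
proof -
  have Mab_twin: "Mab a b *v (evec a - evec b) = 2 *s (evec a - evec b)"
    using distinct by (simp add: vec_eq_iff Mab_mulvec_nth evec_def)
  show ?thesis
    unfolding matrix_vector_mult_add_rdistrib cscale_mulvec laplacian_mulvec_twin_vector Mab_twin
    by (simp add: vec_eq_iff algebra_simps)
qed

lemma U_perturbed_laplacian_twin_vector:
  "U perturbed_laplacian t *v (evec a - evec b)
     = exp (- (\<i> * of_real t) * (twin_eigenvalue E a b + 2 * of_real \<alpha>)) *s (evec a - evec b)"
  unfolding U_def
  by (rule mexp_mulvec_eigenvector)
    (simp only: cscale_mulvec perturbed_laplacian_mulvec_twin_vector vector_smult_assoc)

lemma U_evec_twin_decomposition:
  fixes t :: real
  defines "w \<equiv> (1/2) *s (evec a + evec b)" and "v \<equiv> evec a - evec b"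
    and "c \<equiv> exp (- (\<i> * of_real t) * twin_eigenvalue E a b)"
  shows "U (laplacian E) t *v evec a = U (laplacian E) t *v w + (c / 2) *s v"
    and "U (laplacian E) t *v evec b = U (laplacian E) t *v w - (c / 2) *s v"
    and "U perturbed_laplacian t *v evec a
           = U (laplacian E) t *v w + (c * exp (- (\<i> * of_real t) * (2 * of_real \<alpha>)) / 2) *s v"
    and "(U (laplacian E) t *v w) $ a = (U (laplacian E) t *v w) $ b"
proof -
  have split: "evec a = w + (1/2) *s v" "evec b = w - (1/2) *s v" and balanced: "w $ a = w $ b"
    using distinct by (simp_all add: w_def v_def vec_eq_iff evec_def)
  have L_v: "U (laplacian E) t *v v = c *s v"
    unfolding v_def c_def by (rule U_laplacian_twin_vector)
  have H_v: "U perturbed_laplacian t *v v = (c * exp (- (\<i> * of_real t) * (2 * of_real \<alpha>))) *s v"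
    unfolding v_def c_def exp_add[symmetric] distrib_left[symmetric] by (rule U_perturbed_laplacian_twin_vector)
  show "U (laplacian E) t *v evec a = U (laplacian E) t *v w + (c / 2) *s v"
    unfolding split(1) matrix_vector_right_distrib vector_scalar_commute L_v by simp
  show "U (laplacian E) t *v evec b = U (laplacian E) t *v w - (c / 2) *s v"
    unfolding split(2) matrix_vector_mult_diff_distrib vector_scalar_commute L_v by simp
  show "U perturbed_laplacian t *v evec a
      = U (laplacian E) t *v w + (c * exp (- (\<i> * of_real t) * (2 * of_real \<alpha>)) / 2) *s v"
    unfolding split(1) matrix_vector_right_distrib vector_scalar_commute
      U_mulvec_balanced(1)[OF balanced] H_v by simp
  show "(U (laplacian E) t *v w) $ a = (U (laplacian E) t *v w) $ b"
    by (rule U_mulvec_balanced(2)[OF balanced])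
qed

text \<open>The right-hand side is \<open>U\<^bsub>L\<^esub>(t) e\<^sub>a\<close> with its coordinates \<open>a\<close> and \<open>b\<close> interchanged.\<close>

lemma U_laplacian_evec_exchange:
  fixes t :: real
  defines "x \<equiv> U (laplacian E) t *v evec a"
  shows "U (laplacian E) t *v evec b = x - (x $ a - x $ b) *s (evec a - evec b)"
  using U_evec_twin_decomposition(1,2,4)[of t] distinct
  unfolding x_def by (simp add: vec_eq_iff evec_def)

lemma U_perturbed_laplacian_evec_swap:
  assumes "exp (- (\<i> * of_real t) * (2 * of_real \<alpha>)) = -1"
  shows "U perturbed_laplacian t *v evec a = U (laplacian E) t *v evec b"
  using U_evec_twin_decomposition(2,3)[of t] assms by simp

end

end

lemma pgst_twins_from_almost_periodic:
  fixes E :: "'n::finite \<Rightarrow> 'n \<Rightarrow> bool"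
  assumes simple: "simple_graph E" and distinct: "a \<noteq> b"
    and twins: "nbhd E a - {b} = nbhd E b - {a}"
    and periodic: "almost_periodic (laplacian E) a \<tau>"
    and odd: "\<forall>k. \<exists>m::int. 2 * \<alpha> * \<tau> k = pi * (2 * of_int m + 1)"
  shows "pgst (perturbed_laplacian E a b \<alpha>) a b \<tau>" and "pgst (perturbed_laplacian E a b \<alpha>) b a \<tau>"
proof -
  let ?H = "perturbed_laplacian E a b \<alpha>"
  have twins_ba: "nbhd E b - {a} = nbhd E a - {b}"
    using twins by simp
  obtain \<gamma> where lim_a: "(\<lambda>k. U (laplacian E) (\<tau> k) *v evec a) \<longlonglongrightarrow> \<gamma> *s evec a"
    using periodic unfolding almost_periodic_def by blast
  then have lim_b: "(\<lambda>k. U (laplacian E) (\<tau> k) *v evec b) \<longlonglongrightarrow> \<gamma> *s evec b"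
    unfolding U_laplacian_evec_exchange[OF simple distinct twins]
    by (rule tendsto_exchange_coords[OF _ distinct])
  have phase: "exp (- (\<i> * of_real (\<tau> k)) * (2 * of_real \<alpha>)) = -1" for k
    using odd exp_odd_multiple_of_pi by metis
  have "U ?H (\<tau> k) *v evec a = U (laplacian E) (\<tau> k) *v evec b" for k
    by (rule U_perturbed_laplacian_evec_swap[OF simple distinct twins phase])
  with lim_b distinct show "pgst ?H a b \<tau>"
    unfolding pgst_def by auto
  have "U ?H (\<tau> k) *v evec b = U (laplacian E) (\<tau> k) *v evec a" for k
    using U_perturbed_laplacian_evec_swap[OF simple distinct[symmetric] twins_ba phase] by (simp add: Mab_commute)
  with lim_a distinct show "pgst ?H b a \<tau>"
    unfolding pgst_def by auto
qed

theorem theorem3p2: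
  fixes E :: "'n::finite \<Rightarrow> 'n \<Rightarrow> bool"
    and a b p :: 'n and \<alpha> :: real and \<tau> :: "nat \<Rightarrow> real"
  assumes "simple_graph E" and "connected_graph E"
    and "a \<noteq> b"
    and "nbhd E a - {b} = nbhd E b - {a}"
    and "almost_periodic (laplacian E) p \<tau>"
  shows "(p \<in> {a, b} \<and> (\<forall>k. \<exists>m::int. 2 * \<alpha> * \<tau> k = pi * (2 * of_int m + 1)) \<longrightarrow>
            pgst (laplacian E + cscale (of_real \<alpha>) (Mab a b)) a b \<tau> \<and>
            pgst (laplacian E + cscale (of_real \<alpha>) (Mab a b)) b a \<tau>)
       \<and> (p \<notin> {a, b} \<longrightarrow>
            almost_periodic (laplacian E + cscale (of_real \<alpha>) (Mab a b)) p \<tau>)"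
proof (intro conjI impI)
  assume "p \<in> {a, b} \<and> (\<forall>k. \<exists>m::int. 2 * \<alpha> * \<tau> k = pi * (2 * of_int m + 1))"
  then have ab: "p = a \<or> p = b" and odd: "\<forall>k. \<exists>m::int. 2 * \<alpha> * \<tau> k = pi * (2 * of_int m + 1)"
    by auto
  have "nbhd E b - {a} = nbhd E a - {b}"
    using assms(4) by simp
  note from_a = pgst_twins_from_almost_periodic[OF assms(1,3,4) _ odd]
    and from_b = pgst_twins_from_almost_periodic[OF assms(1) assms(3)[symmetric] this _ odd]
  from ab show "pgst (laplacian E + cscale (of_real \<alpha>) (Mab a b)) a b \<tau>"
    and "pgst (laplacian E + cscale (of_real \<alpha>) (Mab a b)) b a \<tau>"
    using from_a from_b assms(5) by (auto simp: Mab_commute)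
next
  assume "p \<notin> {a, b}"
  then have "evec p $ a = evec p $ b"
    by (auto simp: evec_def)
  then show "almost_periodic (laplacian E + cscale (of_real \<alpha>) (Mab a b)) p \<tau>"
    using assms(5) U_mulvec_balanced(1)[OF assms(1,3,4)] unfolding almost_periodic_def by simp
qed

end
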